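(* Let $N\ge1$, real $\delta,\varepsilon>0$, and arbitrary real $r_i,c_i,c'_i$ ($1\le i\le N$). For integers $l,m,n$ put $\eta_i(l,m,n)=\max(0,r_i-\delta)l-\max(0,-r_i-\varepsilon)m+r_in+c_i$, $\eta'_i(l,m,n)=\max(0,-r_i-\delta)l-\max(0,r_i-\varepsilon)m-r_in+c'_i$, $\phi_i(l,m,n)=\max(\eta_i(l,m,n),\eta'_i(l,m,n))$ and $\tau(l,m,n)=\max[\phi_i(l,m,n+j-1)]_{1\le i,j\le N}$. Then $\tau$ satisfies the ultradiscrete two-dimensional Toda lattice equation \[ \tau(l,m-1,n)+\tau(l+1,m,n)=\max\bigl(\tau(l,m,n)+\tau(l+1,m-1,n),\ \tau(l,m-1,n+1)+\tau(l+1,m,n-1)-\delta-\varepsilon\bigr) \] for all integers $l,m,n$.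
   Context: Ultradiscrete permanent (UP): for a real $N\times N$ matrix $A=(a_{ij})$, $\max[a_{ij}]_{1\le i,j\le N}\equiv\max_{\pi}\sum_{i=1}^N a_{i\pi(i)}$ over all permutations $\pi$ of $\{1,\dots,N\}$. *)

theory Defs
  imports "HOL-Combinatorics.Permutations" Complex_Main
begin

definition updisc :: "nat \<Rightarrow> (nat \<Rightarrow> nat \<Rightarrow> real) \<Rightarrow> real" where
  "updisc N a = Max ((\<lambda>p. \<Sum>i\<in>{1..N}. a i (p i)) ` {p. p permutes {1..N}})"

definition eta :: "real \<Rightarrow> real \<Rightarrow> real \<Rightarrow> real \<Rightarrow> int \<Rightarrow> int \<Rightarrow> int \<Rightarrow> real" where
  "eta \<delta> \<epsilon> r c l m n =
     max 0 (r - \<delta>) * of_int l - max 0 (- r - \<epsilon>) * of_int m + r * of_int n + c"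

definition eta' :: "real \<Rightarrow> real \<Rightarrow> real \<Rightarrow> real \<Rightarrow> int \<Rightarrow> int \<Rightarrow> int \<Rightarrow> real" where
  "eta' \<delta> \<epsilon> r c' l m n =
     max 0 (- r - \<delta>) * of_int l - max 0 (r - \<epsilon>) * of_int m - r * of_int n + c'"

definition phi :: "real \<Rightarrow> real \<Rightarrow> real \<Rightarrow> real \<Rightarrow> real \<Rightarrow> int \<Rightarrow> int \<Rightarrow> int \<Rightarrow> real" where
  "phi \<delta> \<epsilon> r c c' l m n = max (eta \<delta> \<epsilon> r c l m n) (eta' \<delta> \<epsilon> r c' l m n)"

definition tau :: "nat \<Rightarrow> real \<Rightarrow> real \<Rightarrow> (nat \<Rightarrow> real) \<Rightarrow> (nat \<Rightarrow> real) \<Rightarrow> (nat \<Rightarrow> real)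
                    \<Rightarrow> int \<Rightarrow> int \<Rightarrow> int \<Rightarrow> real" where
  "tau N \<delta> \<epsilon> r c c' l m n =
     updisc N (\<lambda>i j. phi \<delta> \<epsilon> (r i) (c i) (c' i) l m (n + int j - 1))"

end

theory Submission
  imports Defs
begin

text \<open>Writing \<open>phi\<close> at column \<open>j\<close> as the maximum of a rising line \<open>f i + \<bar>r i\<bar> (j - 1)\<close> and a
  falling line \<open>g i - \<bar>r i\<bar> (j - 1)\<close>, \<open>tau\<close> becomes a maximum over the set \<open>P\<close> of rows taking
  the rising line; the best column assignment then just sorts the signed slopes.
  A pair of such sets \<open>(P, Q)\<close> is described by \<open>C = P \<inter> Q\<close>, \<open>M = P \<union> Q - C\<close> and \<open>U = Q - P \<subseteq> M\<close>.
  Listing \<open>M\<close> by decreasing \<open>\<bar>r i\<bar>\<close> turns \<open>U\<close> into a \<open>\<plusminus>1\<close> walk \<open>h\<close>, and each of the three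
  sums of two \<open>tau\<close> values in the Toda equation becomes a common constant plus a walk functional:
  \<open>X h\<close>, \<open>Y h\<close> and \<open>X (h + 2) - \<delta> - \<epsilon>\<close>. The equation then reduces to three comparisons of walks:
  \<open>Y h \<le> X \<bar>h\<bar>\<close>; \<open>X (h + 2) - \<delta> - \<epsilon>\<close> is at most \<open>X\<close> of \<open>h + 2\<close> folded at level 1; and \<open>X h\<close> is
  below \<open>Y h'\<close> or \<open>X (h' + 2) - \<delta> - \<epsilon>\<close> for \<open>h'\<close> equal to \<open>h\<close> kept, reflected or lowered after its first
  step above 0. Each comparison is a summation by parts against the decreasing weights \<open>\<bar>r i\<bar>\<close>.\<close>

section \<open>Walks\<close>

lemma sum_weighted_increments_ge:
  fixes w p :: "nat \<Rightarrow> real"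
  assumes w_nonneg: "\<And>k. 0 \<le> w k" and w_decr: "\<And>k. Suc k < n \<Longrightarrow> w (Suc k) \<le> w k"
    and p_nonneg: "\<And>k. k \<le> n \<Longrightarrow> 0 \<le> p k"
  shows "(\<Sum>k<n. w k * (p (Suc k) - p k)) \<ge> - w 0 * p 0"
proof -
  have partial: "(\<Sum>k<m. w k * (p (Suc k) - p k)) \<ge> w (m - 1) * p m - w 0 * p 0" if "m \<le> n" for m
    using that
  proof (induction m)
    case (Suc m)
    have "w m * p m \<le> w (m - 1) * p m"
      using w_decr[of "m - 1"] p_nonneg[of m] Suc.prems by (cases m) (auto intro: mult_right_mono)
    with Suc show ?case by (simp add: algebra_simps)
  qed simp
  show ?thesis
    using partial[of n] mult_nonneg_nonneg[OF w_nonneg[of "n - 1"] p_nonneg[of n]] by simp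
qed

definition is_walk :: "nat \<Rightarrow> (nat \<Rightarrow> int) \<Rightarrow> bool" where
  "is_walk n h \<longleftrightarrow> h 0 = 0 \<and> (\<forall>k<n. h (Suc k) = h k + 1 \<or> h (Suc k) = h k - 1)"

text \<open>An up-step at \<open>k\<close> earns \<open>u k\<close>, a down-step \<open>d k\<close>; the quadratic term is what the
  pairwise maxima of \<open>pair_max_sum\<close> contribute (lemma \<open>sum_pair_gain_eq_walk_value\<close>).\<close>

definition walk_step :: "(nat \<Rightarrow> real) \<Rightarrow> (nat \<Rightarrow> real) \<Rightarrow> (nat \<Rightarrow> real) \<Rightarrow> (nat \<Rightarrow> int) \<Rightarrow> nat \<Rightarrow> real" where
  "walk_step \<alpha> u d h k = (if h k < h (Suc k) then u k else d k) - \<alpha> k * of_int ((h (Suc k) - h k) * h k)"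

definition walk_value :: "nat \<Rightarrow> (nat \<Rightarrow> real) \<Rightarrow> (nat \<Rightarrow> real) \<Rightarrow> (nat \<Rightarrow> real) \<Rightarrow> (nat \<Rightarrow> int) \<Rightarrow> real" where
  "walk_value n \<alpha> u d h = (\<Sum>k<n. walk_step \<alpha> u d h k)"

lemma is_walkD: "is_walk n h \<Longrightarrow> k < n \<Longrightarrow> h (Suc k) = h k + 1 \<or> h (Suc k) = h k - 1"
  unfolding is_walk_def by blast

lemma is_walk_stepE:
  assumes "is_walk n h" and "k < n"
  obtains s where "h (Suc k) = h k + s" and "s = 1 \<or> s = -1"
  using is_walkD[OF assms] by force

lemma is_walk_prefix: "is_walk n h \<Longrightarrow> j \<le> n \<Longrightarrow> is_walk j h"
  unfolding is_walk_def by auto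

lemma is_walk_abs: "is_walk n h \<Longrightarrow> is_walk n (\<lambda>k. \<bar>h k\<bar>)"
  unfolding is_walk_def by (auto simp: abs_if)

lemma is_walk_fold: "is_walk n h \<Longrightarrow> is_walk n (\<lambda>k. 1 - \<bar>h k + 1\<bar>)"
  unfolding is_walk_def by (auto simp: abs_if)

lemma walk_value_cong:
  "(\<And>k. k \<le> n \<Longrightarrow> h k = h' k) \<Longrightarrow> walk_value n \<alpha> u d h = walk_value n \<alpha> u d h'"
  unfolding walk_value_def walk_step_def by (intro sum.cong) auto

lemma walk_value_offset:
  assumes "\<And>k. u' k = u k + c k" and "\<And>k. d' k = d k + c k"
  shows "walk_value n \<alpha> u' d' h = (\<Sum>k<n. c k) + walk_value n \<alpha> u d h"
  unfolding walk_value_def walk_step_def sum.distrib[symmetric] using assms by (intro sum.cong) auto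

lemma walk_value_split_rewards:
  "walk_value n \<alpha> u d h = (\<Sum>k<n. if h k < h (Suc k) then u k else d k) + walk_value n \<alpha> (\<lambda>_. 0) (\<lambda>_. 0) h"
  unfolding walk_value_def walk_step_def sum.distrib[symmetric] by (intro sum.cong) auto

lemma walk_value_shift:
  assumes "is_walk n h"
  shows "walk_value n \<alpha> u d (\<lambda>k. h k + t)
       = walk_value n \<alpha> (\<lambda>k. u k - of_int t * \<alpha> k) (\<lambda>k. d k + of_int t * \<alpha> k) h"
  unfolding walk_value_def
proof (intro sum.cong refl)
  fix k assume "k \<in> {..<n}"
  then have "h (Suc k) = h k + 1 \<or> h (Suc k) = h k - 1" using is_walkD[OF assms] by simp
  then show "walk_step \<alpha> u d (\<lambda>k. h k + t) k
      = walk_step \<alpha> (\<lambda>k. u k - of_int t * \<alpha> k) (\<lambda>k. d k + of_int t * \<alpha> k) h k"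
    unfolding walk_step_def by (elim disjE) (simp_all add: ring_distribs)
qed

lemma walk_value_split:
  assumes "j < n"
  shows "walk_value n \<alpha> u d h
       = walk_value j \<alpha> u d h + walk_step \<alpha> u d h j + (\<Sum>k\<in>{Suc j..<n}. walk_step \<alpha> u d h k)"
proof -
  have "{..<n} = {..<j} \<union> {j..<n}" using assms by auto
  then have "walk_value n \<alpha> u d h = walk_value j \<alpha> u d h + (\<Sum>k\<in>{j..<n}. walk_step \<alpha> u d h k)"
    unfolding walk_value_def by (simp add: sum.union_disjoint ivl_disj_int)
  then show ?thesis using assms by (simp add: sum.atLeast_Suc_lessThan)
qed

lemma walk_value_le_abs:
  assumes walk: "is_walk n h"
    and A_nonneg: "\<And>k. 0 \<le> A k" and A_decr: "\<And>k. Suc k < n \<Longrightarrow> A (Suc k) \<le> A k"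
    and B_nonneg: "\<And>k. 0 \<le> B k" and B_decr: "\<And>k. Suc k < n \<Longrightarrow> B (Suc k) \<le> B k"
  shows "walk_value n \<alpha> A B h \<le> walk_value n \<alpha> (\<lambda>k. A k + B k) (\<lambda>_. 0) (\<lambda>k. \<bar>h k\<bar>)"
proof -
  define p where "p k = real_of_int (max 0 (h k))" for k
  define q where "q k = real_of_int (max 0 (- h k))" for k
  have "walk_value n \<alpha> (\<lambda>k. A k + B k) (\<lambda>_. 0) (\<lambda>k. \<bar>h k\<bar>) - walk_value n \<alpha> A B h
      = (\<Sum>k<n. B k * (p (Suc k) - p k)) + (\<Sum>k<n. A k * (q (Suc k) - q k))"
    unfolding walk_value_def sum_subtractf[symmetric] sum.distrib[symmetric]
  proof (intro sum.cong refl)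
    fix k assume "k \<in> {..<n}"
    then obtain s where step: "h (Suc k) = h k + s" "s = 1 \<or> s = -1" by (auto elim: is_walk_stepE[OF walk])
    consider "h k \<ge> 1" | "h k = 0" | "h k \<le> -1" by linarith
    then show "walk_step \<alpha> (\<lambda>k. A k + B k) (\<lambda>_. 0) (\<lambda>k. \<bar>h k\<bar>) k - walk_step \<alpha> A B h k
        = B k * (p (Suc k) - p k) + A k * (q (Suc k) - q k)"
      using step(2) by cases (auto simp: step(1) walk_step_def p_def q_def algebra_simps)
  qed
  moreover have "(\<Sum>k<n. B k * (p (Suc k) - p k)) \<ge> 0" "(\<Sum>k<n. A k * (q (Suc k) - q k)) \<ge> 0"
    using sum_weighted_increments_ge[of B n p] sum_weighted_increments_ge[of A n q] walk
      A_nonneg A_decr B_nonneg B_decr by (auto simp: p_def q_def is_walk_def)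
  ultimately show ?thesis by linarith
qed

text \<open>\<open>1 - \<bar>h k + 1\<bar>\<close> is \<open>h k + 2\<close> with its part above level 1 reflected about level 1.\<close>

lemma walk_value_fold:
  assumes walk: "is_walk n h"
    and \<alpha>_nonneg: "\<And>k. 0 \<le> \<alpha> k" and \<alpha>_decr: "\<And>k. Suc k < n \<Longrightarrow> \<alpha> (Suc k) \<le> \<alpha> k"
    and "\<delta> > 0" and "\<epsilon> > 0"
  defines "c \<equiv> \<lambda>k. max 0 (\<alpha> k - \<delta>) + max 0 (\<alpha> k - \<epsilon>)"
  shows "walk_value n \<alpha> c (\<lambda>_. 0) (\<lambda>k. h k + 2) - \<delta> - \<epsilon>
       \<le> walk_value n \<alpha> c (\<lambda>_. 0) (\<lambda>k. 1 - \<bar>h k + 1\<bar>)"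
proof -
  define p where "p k = real_of_int (max 0 (h k + 1))" for k
  define \<kappa> where "\<kappa> k = min (\<alpha> k) \<delta> + min (\<alpha> k) \<epsilon>" for k
  have \<kappa>_eq: "2 * \<alpha> k - c k = \<kappa> k" for k
    unfolding c_def \<kappa>_def by (auto simp: max_def min_def)
  have "walk_value n \<alpha> c (\<lambda>_. 0) (\<lambda>k. 1 - \<bar>h k + 1\<bar>) - walk_value n \<alpha> c (\<lambda>_. 0) (\<lambda>k. h k + 2)
      = (\<Sum>k<n. \<kappa> k * (p (Suc k) - p k))"
    unfolding walk_value_def sum_subtractf[symmetric]
  proof (intro sum.cong refl)
    fix k assume "k \<in> {..<n}"
    then obtain s where step: "h (Suc k) = h k + s" "s = 1 \<or> s = -1" by (auto elim: is_walk_stepE[OF walk])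
    consider "h k \<ge> 0" | "h k = -1" | "h k \<le> -2" by linarith
    then have "walk_step \<alpha> c (\<lambda>_. 0) (\<lambda>k. 1 - \<bar>h k + 1\<bar>) k - walk_step \<alpha> c (\<lambda>_. 0) (\<lambda>k. h k + 2) k
        = (2 * \<alpha> k - c k) * (p (Suc k) - p k)"
      using step(2) by cases (auto simp: step(1) walk_step_def p_def algebra_simps)
    then show "walk_step \<alpha> c (\<lambda>_. 0) (\<lambda>k. 1 - \<bar>h k + 1\<bar>) k - walk_step \<alpha> c (\<lambda>_. 0) (\<lambda>k. h k + 2) k
        = \<kappa> k * (p (Suc k) - p k)"
      by (simp add: \<kappa>_eq)
  qed
  also have "\<dots> \<ge> - \<kappa> 0 * p 0"
  proof (rule sum_weighted_increments_ge)
    show "0 \<le> \<kappa> k" for k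
      using \<alpha>_nonneg[of k] \<open>\<delta> > 0\<close> \<open>\<epsilon> > 0\<close> by (simp add: \<kappa>_def)
    show "\<kappa> (Suc k) \<le> \<kappa> k" if "Suc k < n" for k
      using \<alpha>_decr[OF that] unfolding \<kappa>_def by (intro add_mono min.mono) auto
  qed (simp add: p_def)
  moreover have "\<kappa> 0 * p 0 \<le> \<delta> + \<epsilon>"
    using walk by (simp add: is_walk_def p_def \<kappa>_def)
  ultimately show ?thesis by linarith
qed

lemma walk_value_le_when_nonpos:
  assumes walk: "is_walk n h" and nonpos: "\<And>k. k \<le> n \<Longrightarrow> h k \<le> 0"
    and B_nonneg: "\<And>k. 0 \<le> B k" and B_decr: "\<And>k. Suc k < n \<Longrightarrow> B (Suc k) \<le> B k"
  shows "walk_value n \<alpha> (\<lambda>k. A k + B k) (\<lambda>_. 0) h \<le> walk_value n \<alpha> A B h"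
proof -
  define q where "q k = - real_of_int (h k)" for k
  have "walk_value n \<alpha> A B h - walk_value n \<alpha> (\<lambda>k. A k + B k) (\<lambda>_. 0) h = (\<Sum>k<n. B k * (q (Suc k) - q k))"
    unfolding walk_value_def sum_subtractf[symmetric]
  proof (intro sum.cong refl)
    fix k assume "k \<in> {..<n}"
    then obtain s where step: "h (Suc k) = h k + s" "s = 1 \<or> s = -1" by (auto elim: is_walk_stepE[OF walk])
    then show "walk_step \<alpha> A B h k - walk_step \<alpha> (\<lambda>k. A k + B k) (\<lambda>_. 0) h k = B k * (q (Suc k) - q k)"
      by (auto simp: walk_step_def q_def algebra_simps)
  qed
  moreover have "(\<Sum>k<n. B k * (q (Suc k) - q k)) \<ge> 0"
    using sum_weighted_increments_ge[of B n q] B_nonneg B_decr nonpos walk by (simp add: q_def is_walk_def)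
  ultimately show ?thesis by linarith
qed

lemma walk_value_le_raised_when_nonpos:
  assumes walk: "is_walk n h" and nonpos: "\<And>k. k \<le> n \<Longrightarrow> h k \<le> 0"
    and \<alpha>_nonneg: "\<And>k. 0 \<le> \<alpha> k" and \<alpha>_decr: "\<And>k. Suc k < n \<Longrightarrow> \<alpha> (Suc k) \<le> \<alpha> k"
    and "0 \<le> t"
  shows "walk_value n \<alpha> u d h \<le> walk_value n \<alpha> u d (\<lambda>k. h k + t)"
proof -
  define q where "q k = - real_of_int (h k)" for k
  have "walk_value n \<alpha> u d (\<lambda>k. h k + t) - walk_value n \<alpha> u d h = (\<Sum>k<n. of_int t * \<alpha> k * (q (Suc k) - q k))"
    unfolding walk_value_def sum_subtractf[symmetric]
  proof (intro sum.cong refl)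
    fix k assume "k \<in> {..<n}"
    then obtain s where step: "h (Suc k) = h k + s" "s = 1 \<or> s = -1" by (auto elim: is_walk_stepE[OF walk])
    then show "walk_step \<alpha> u d (\<lambda>k. h k + t) k - walk_step \<alpha> u d h k = of_int t * \<alpha> k * (q (Suc k) - q k)"
      by (auto simp: walk_step_def q_def algebra_simps)
  qed
  moreover have "(\<Sum>k<n. of_int t * \<alpha> k * (q (Suc k) - q k)) \<ge> 0"
    using sum_weighted_increments_ge[of "\<lambda>k. of_int t * \<alpha> k" n q] \<open>0 \<le> t\<close> \<alpha>_nonneg \<alpha>_decr nonpos walk
    by (simp add: q_def is_walk_def mult_left_mono)
  ultimately show ?thesis by linarith
qed

lemma walk_first_positive:
  assumes walk: "is_walk n h" and "k \<le> n" and "h k > 0"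
  obtains j where "j < n" "h j = 0" "h (Suc j) = 1" "\<And>i. i \<le> j \<Longrightarrow> h i \<le> 0"
proof -
  define j' where "j' = (LEAST i. h i > 0)"
  have pos: "h j' > 0" unfolding j'_def by (rule LeastI[of _ k]) (use assms in auto)
  have "j' \<le> k" unfolding j'_def by (rule Least_le) (use assms in auto)
  have before: "h i \<le> 0" if "i < j'" for i
    using not_less_Least[OF that[unfolded j'_def]] by simp
  have "j' \<noteq> 0" using pos walk unfolding is_walk_def by (metis less_irrefl)
  then obtain j where j: "j' = Suc j" by (cases j') auto
  with \<open>j' \<le> k\<close> \<open>k \<le> n\<close> have "j < n" by simp
  with before[of j] pos j is_walkD[OF walk] have "h j = 0" "h (Suc j) = 1" by force+
  with \<open>j < n\<close> before j show ?thesis by (intro that) auto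
qed

lemma walk_value_le_same_walk:
  assumes walk: "is_walk n h" and "j < n" and nonpos: "\<And>i. i \<le> j \<Longrightarrow> h i \<le> 0"
    and B_nonneg: "\<And>k. 0 \<le> B k" and B_decr: "\<And>k. Suc k < n \<Longrightarrow> B (Suc k) \<le> B k"
    and B_vanish: "\<And>k. j \<le> k \<Longrightarrow> k < n \<Longrightarrow> B k = 0"
  shows "walk_value n \<alpha> (\<lambda>k. A k + B k) (\<lambda>_. 0) h \<le> walk_value n \<alpha> A B h"
proof -
  have same: "walk_step \<alpha> (\<lambda>k. A k + B k) (\<lambda>_. 0) h k = walk_step \<alpha> A B h k" if "j \<le> k" "k < n" for k
    using B_vanish[OF that] by (simp add: walk_step_def)
  have "walk_value j \<alpha> (\<lambda>k. A k + B k) (\<lambda>_. 0) h \<le> walk_value j \<alpha> A B h"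
    using \<open>j < n\<close> by (intro walk_value_le_when_nonpos is_walk_prefix[OF walk] nonpos B_nonneg B_decr) auto
  with \<open>j < n\<close> show ?thesis
    unfolding walk_value_split[OF \<open>j < n\<close>] by (simp add: same)
qed

lemma is_walk_reflect_after:
  assumes walk: "is_walk n h" and "h j = 0"
  shows "is_walk n (\<lambda>k. if k \<le> j then h k else - h k)"
  unfolding is_walk_def
proof (intro conjI allI impI)
  show "(if 0 \<le> j then h 0 else - h 0) = 0" using walk by (simp add: is_walk_def)
  fix k assume "k < n"
  then have step: "h (Suc k) = h k + 1 \<or> h (Suc k) = h k - 1" by (rule is_walkD[OF walk])
  consider "Suc k \<le> j" | "k = j" | "j < k" by linarith
  then show "(if Suc k \<le> j then h (Suc k) else - h (Suc k)) = (if k \<le> j then h k else - h k) + 1 \<or>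
      (if Suc k \<le> j then h (Suc k) else - h (Suc k)) = (if k \<le> j then h k else - h k) - 1"
    using step \<open>h j = 0\<close> by cases auto
qed

lemma walk_value_le_reflected_walk:
  assumes walk: "is_walk n h" and "j < n" and "h j = 0" and nonpos: "\<And>i. i \<le> j \<Longrightarrow> h i \<le> 0"
    and B_nonneg: "\<And>k. 0 \<le> B k" and B_decr: "\<And>k. Suc k < n \<Longrightarrow> B (Suc k) \<le> B k"
    and A_vanish: "\<And>k. j \<le> k \<Longrightarrow> k < n \<Longrightarrow> A k = 0"
  shows "walk_value n \<alpha> (\<lambda>k. A k + B k) (\<lambda>_. 0) h
       \<le> walk_value n \<alpha> A B (\<lambda>k. if k \<le> j then h k else - h k)"
    (is "_ \<le> walk_value n \<alpha> A B ?h'")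
proof -
  have reflected: "?h' k = - h k" if "j \<le> k" for k
    using that \<open>h j = 0\<close> by auto
  have same: "walk_step \<alpha> (\<lambda>k. A k + B k) (\<lambda>_. 0) h k = walk_step \<alpha> A B ?h' k" if "j \<le> k" "k < n" for k
  proof -
    obtain s where "h (Suc k) = h k + s" "s = 1 \<or> s = -1" using is_walk_stepE[OF walk \<open>k < n\<close>] by blast
    then show ?thesis
      using A_vanish[OF that] reflected[of k] reflected[of "Suc k"] that
      by (auto simp: walk_step_def algebra_simps)
  qed
  have "walk_value j \<alpha> (\<lambda>k. A k + B k) (\<lambda>_. 0) h \<le> walk_value j \<alpha> A B h"
    using \<open>j < n\<close> by (intro walk_value_le_when_nonpos is_walk_prefix[OF walk] nonpos B_nonneg B_decr) auto
  also have "\<dots> = walk_value j \<alpha> A B ?h'"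
    by (rule walk_value_cong) simp
  finally show ?thesis
    using \<open>j < n\<close> unfolding walk_value_split[OF \<open>j < n\<close>] by (simp add: same)
qed

lemma is_walk_lower_after:
  assumes walk: "is_walk n h" and "h j = 0" and "h (Suc j) = 1"
  shows "is_walk n (\<lambda>k. if k \<le> j then h k else h k - 2)"
  unfolding is_walk_def
proof (intro conjI allI impI)
  show "(if 0 \<le> j then h 0 else h 0 - 2) = 0" using walk by (simp add: is_walk_def)
  fix k assume "k < n"
  then have step: "h (Suc k) = h k + 1 \<or> h (Suc k) = h k - 1" by (rule is_walkD[OF walk])
  consider "Suc k \<le> j" | "k = j" | "j < k" by linarith
  then show "(if Suc k \<le> j then h (Suc k) else h (Suc k) - 2) = (if k \<le> j then h k else h k - 2) + 1 \<or>
      (if Suc k \<le> j then h (Suc k) else h (Suc k) - 2) = (if k \<le> j then h k else h k - 2) - 1"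
    using step \<open>h j = 0\<close> \<open>h (Suc j) = 1\<close> by cases auto
qed

lemma walk_value_le_lowered_walk:
  assumes walk: "is_walk n h" and "j < n" and "h j = 0" and "h (Suc j) = 1"
    and nonpos: "\<And>i. i \<le> j \<Longrightarrow> h i \<le> 0"
    and \<alpha>_nonneg: "\<And>k. 0 \<le> \<alpha> k" and \<alpha>_decr: "\<And>k. Suc k < n \<Longrightarrow> \<alpha> (Suc k) \<le> \<alpha> k"
    and "\<delta> \<le> \<alpha> j" and "\<epsilon> \<le> \<alpha> j"
  defines "c \<equiv> \<lambda>k. max 0 (\<alpha> k - \<delta>) + max 0 (\<alpha> k - \<epsilon>)"
  shows "walk_value n \<alpha> c (\<lambda>_. 0) h
       \<le> walk_value n \<alpha> c (\<lambda>_. 0) (\<lambda>k. (if k \<le> j then h k else h k - 2) + 2) - \<delta> - \<epsilon>"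
    (is "_ \<le> walk_value _ _ _ _ ?g - _ - _")
proof -
  have "walk_value j \<alpha> c (\<lambda>_. 0) h \<le> walk_value j \<alpha> c (\<lambda>_. 0) (\<lambda>k. h k + 2)"
    using \<open>j < n\<close> by (intro walk_value_le_raised_when_nonpos is_walk_prefix[OF walk] nonpos \<alpha>_nonneg \<alpha>_decr) auto
  also have "\<dots> = walk_value j \<alpha> c (\<lambda>_. 0) ?g"
    by (rule walk_value_cong) simp
  finally have prefix: "walk_value j \<alpha> c (\<lambda>_. 0) h \<le> walk_value j \<alpha> c (\<lambda>_. 0) ?g" .
  have turn: "walk_step \<alpha> c (\<lambda>_. 0) h j = walk_step \<alpha> c (\<lambda>_. 0) ?g j - \<delta> - \<epsilon>"
    using \<open>h j = 0\<close> \<open>h (Suc j) = 1\<close> \<open>\<delta> \<le> \<alpha> j\<close> \<open>\<epsilon> \<le> \<alpha> j\<close> by (simp add: walk_step_def c_def)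
  have suffix: "walk_step \<alpha> c (\<lambda>_. 0) h k = walk_step \<alpha> c (\<lambda>_. 0) ?g k" if "Suc j \<le> k" for k
    using that by (simp add: walk_step_def)
  show ?thesis
    using prefix turn unfolding walk_value_split[OF \<open>j < n\<close>] by (simp add: suffix)
qed

text \<open>A walk staying \<open>\<le> 0\<close> is dominated by itself. Otherwise let \<open>j\<close> be its first step from 0 to 1:
  if \<open>B\<close> vanishes from \<open>j\<close> on, keep the walk; if \<open>A\<close> does, reflect it after \<open>j\<close>; otherwise
  lower it by 2 after \<open>j\<close>, which turns the step at \<open>j\<close> into a down-step gaining \<open>\<delta> + \<epsilon>\<close>.\<close>

lemma walk_value_dominated:
  assumes walk: "is_walk n h"
    and \<alpha>_nonneg: "\<And>k. 0 \<le> \<alpha> k" and \<alpha>_decr: "\<And>k. Suc k < n \<Longrightarrow> \<alpha> (Suc k) \<le> \<alpha> k"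
    and "\<delta> > 0" and "\<epsilon> > 0"
  defines "A \<equiv> \<lambda>k. max 0 (\<alpha> k - \<delta>)" and "B \<equiv> \<lambda>k. max 0 (\<alpha> k - \<epsilon>)"
  obtains h' where "is_walk n h'"
    "walk_value n \<alpha> (\<lambda>k. A k + B k) (\<lambda>_. 0) h \<le> walk_value n \<alpha> A B h'
     \<or> walk_value n \<alpha> (\<lambda>k. A k + B k) (\<lambda>_. 0) h
       \<le> walk_value n \<alpha> (\<lambda>k. A k + B k) (\<lambda>_. 0) (\<lambda>k. h' k + 2) - \<delta> - \<epsilon>"
proof -
  have \<alpha>_antimono: "\<alpha> k \<le> \<alpha> j" if "j \<le> k" "k < n" for j k
    using that
  proof (induction k)
    case (Suc k)
    then show ?case using \<alpha>_decr[of k] by (cases "j = Suc k") auto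
  qed simp
  have A_nonneg: "0 \<le> A k" and B_nonneg: "0 \<le> B k" for k
    by (simp_all add: A_def B_def)
  have A_decr: "A (Suc k) \<le> A k" and B_decr: "B (Suc k) \<le> B k" if "Suc k < n" for k
    using \<alpha>_decr[OF that] by (simp_all add: A_def B_def)
  show ?thesis
  proof (cases "\<forall>k\<le>n. h k \<le> 0")
    case True
    then show ?thesis
      by (intro that[OF walk] disjI1 walk_value_le_when_nonpos walk B_nonneg B_decr) auto
  next
    case False
    then obtain k where "k \<le> n" "h k > 0" by force
    then obtain j where j: "j < n" "h j = 0" "h (Suc j) = 1" and nonpos: "\<And>i. i \<le> j \<Longrightarrow> h i \<le> 0"
      using walk_first_positive[OF walk] by metis
    consider "\<alpha> j < \<epsilon>" | "\<alpha> j < \<delta>" | "\<delta> \<le> \<alpha> j" "\<epsilon> \<le> \<alpha> j" by linarith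
    then show ?thesis
    proof cases
      case 1
      then have "B k = 0" if "j \<le> k" "k < n" for k
        using \<alpha>_antimono[OF that] by (simp add: B_def)
      then show ?thesis
        by (intro that[OF walk] disjI1 walk_value_le_same_walk[OF walk j(1) nonpos] B_nonneg B_decr) auto
    next
      case 2
      then have "A k = 0" if "j \<le> k" "k < n" for k
        using \<alpha>_antimono[OF that] by (simp add: A_def)
      then show ?thesis
        by (intro that[OF is_walk_reflect_after[OF walk j(2)]] disjI1
            walk_value_le_reflected_walk[OF walk j(1,2) nonpos] B_nonneg B_decr) auto
    next
      case 3
      then show ?thesis
        using walk_value_le_lowered_walk[OF walk j nonpos \<alpha>_nonneg \<alpha>_decr 3]
        by (intro that[OF is_walk_lower_after[OF walk j(2,3)]] disjI2) (simp add: A_def B_def)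
    qed
  qed
qed

section \<open>Ultradiscrete permanents of two-line matrices\<close>

definition pair_max_sum :: "'a set \<Rightarrow> ('a \<Rightarrow> real) \<Rightarrow> real" where
  "pair_max_sum I w = (\<Sum>i\<in>I. \<Sum>j\<in>I - {i}. max (w i) (w j)) / 2"

lemma sum_pairs_below_eq_half:
  fixes g :: "'a \<Rightarrow> 'a \<Rightarrow> real" and p :: "'a \<Rightarrow> 'b::linorder"
  assumes fin: "finite I" and inj: "inj_on p I" and sym: "\<And>i j. g i j = g j i"
  shows "(\<Sum>i\<in>I. \<Sum>j\<in>{j\<in>I. p j < p i}. g i j) = (\<Sum>i\<in>I. \<Sum>j\<in>I - {i}. g i j) / 2"
proof -
  let ?below = "\<Sum>i\<in>I. \<Sum>j\<in>{j\<in>I. p j < p i}. g i j"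
  let ?above = "\<Sum>i\<in>I. \<Sum>j\<in>{j\<in>I. p i < p j}. g i j"
  have "?below = (\<Sum>i\<in>I. \<Sum>j\<in>I. if p j < p i then g i j else 0)"
    using fin by (simp add: sum.inter_filter)
  also have "\<dots> = (\<Sum>j\<in>I. \<Sum>i\<in>I. if p j < p i then g i j else 0)"
    by (rule sum.swap)
  also have "\<dots> = (\<Sum>i\<in>I. \<Sum>j\<in>I. if p i < p j then g i j else 0)"
    by (intro sum.cong refl) (simp add: sym)
  also have "\<dots> = ?above"
    using fin by (simp add: sum.inter_filter)
  finally have "?below = ?above" .
  moreover have "?below + ?above = (\<Sum>i\<in>I. \<Sum>j\<in>I - {i}. g i j)"
    unfolding sum.distrib[symmetric]
  proof (intro sum.cong refl)
    fix i assume i: "i \<in> I"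
    have "I - {i} = {j\<in>I. p j < p i} \<union> {j\<in>I. p i < p j}"
    proof (rule set_eqI)
      fix x show "x \<in> I - {i} \<longleftrightarrow> x \<in> {j\<in>I. p j < p i} \<union> {j\<in>I. p i < p j}"
        using inj_on_eq_iff[OF inj, of x i] i by (cases "p x" "p i" rule: linorder_cases) auto
    qed
    moreover have "{j\<in>I. p j < p i} \<inter> {j\<in>I. p i < p j} = {}" by auto
    ultimately show "(\<Sum>j\<in>{j\<in>I. p j < p i}. g i j) + (\<Sum>j\<in>{j\<in>I. p i < p j}. g i j) = (\<Sum>j\<in>I - {i}. g i j)"
      using fin by (simp add: sum.union_disjoint)
  qed
  ultimately show ?thesis by simp
qed

lemma card_permutes_less:
  assumes p: "p permutes {1..N}" and i: "i \<in> {1..N}"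
  shows "card {j\<in>{1..N}. p j < p i} = p i - 1"
proof -
  have inj: "inj_on p {1..N}" and img: "p ` {1..N} = {1..N}"
    using permutes_imp_bij[OF p] by (auto simp: bij_betw_def)
  have "p i \<in> {1..N}" using permutes_in_image[OF p] i by simp
  have "p ` {j\<in>{1..N}. p j < p i} = {1..<p i}"
  proof
    show "p ` {j\<in>{1..N}. p j < p i} \<subseteq> {1..<p i}" using img by auto
    show "{1..<p i} \<subseteq> p ` {j\<in>{1..N}. p j < p i}"
    proof
      fix x assume x: "x \<in> {1..<p i}"
      with \<open>p i \<in> {1..N}\<close> img obtain j where "j \<in> {1..N}" "x = p j" by (metis atLeastAtMost_iff
            atLeastLessThan_iff imageE less_imp_le order.trans)
      with x show "x \<in> p ` {j\<in>{1..N}. p j < p i}" by auto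
    qed
  qed
  moreover have "inj_on p {j\<in>{1..N}. p j < p i}" using inj by (rule inj_on_subset) blast
  ultimately show ?thesis by (simp add: card_image[symmetric])
qed

lemma sum_rank_weight_eq:
  assumes p: "p permutes {1..N}"
  shows "(\<Sum>i\<in>{1..N}. w i * (real (p i) - 1)) = (\<Sum>i\<in>{1..N}. \<Sum>j\<in>{j\<in>{1..N}. p j < p i}. w i)"
proof (intro sum.cong refl)
  fix i assume i: "i \<in> {1..N}"
  then have "p i \<ge> 1" using permutes_in_image[OF p] by auto
  then show "w i * (real (p i) - 1) = (\<Sum>j\<in>{j\<in>{1..N}. p j < p i}. w i)"
    using card_permutes_less[OF p i] by (simp add: of_nat_diff)
qed

lemma sum_rank_weight_le_pair_max_sum:
  assumes p: "p permutes {1..N}"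
  shows "(\<Sum>i\<in>{1..N}. w i * (real (p i) - 1)) \<le> pair_max_sum {1..N} w"
proof -
  have inj: "inj_on p {1..N}" using permutes_imp_bij[OF p] by (auto simp: bij_betw_def)
  have "(\<Sum>i\<in>{1..N}. w i * (real (p i) - 1)) = (\<Sum>i\<in>{1..N}. \<Sum>j\<in>{j\<in>{1..N}. p j < p i}. w i)"
    by (rule sum_rank_weight_eq[OF p])
  also have "\<dots> \<le> (\<Sum>i\<in>{1..N}. \<Sum>j\<in>{j\<in>{1..N}. p j < p i}. max (w i) (w j))"
    by (intro sum_mono) auto
  also have "\<dots> = pair_max_sum {1..N} w"
    unfolding pair_max_sum_def by (rule sum_pairs_below_eq_half[OF _ inj]) (auto simp: max.commute)
  finally show ?thesis .
qed

lemma sum_rank_weight_eq_pair_max_sum: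
  assumes p: "p permutes {1..N}" and sorted: "\<And>i j. i \<in> {1..N} \<Longrightarrow> j \<in> {1..N} \<Longrightarrow> p j < p i \<Longrightarrow> w j \<le> w i"
  shows "(\<Sum>i\<in>{1..N}. w i * (real (p i) - 1)) = pair_max_sum {1..N} w"
proof -
  have inj: "inj_on p {1..N}" using permutes_imp_bij[OF p] by (auto simp: bij_betw_def)
  have "(\<Sum>i\<in>{1..N}. w i * (real (p i) - 1)) = (\<Sum>i\<in>{1..N}. \<Sum>j\<in>{j\<in>{1..N}. p j < p i}. w i)"
    by (rule sum_rank_weight_eq[OF p])
  also have "\<dots> = (\<Sum>i\<in>{1..N}. \<Sum>j\<in>{j\<in>{1..N}. p j < p i}. max (w i) (w j))"
    using sorted by (intro sum.cong refl) (simp add: max_absorb1)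
  also have "\<dots> = pair_max_sum {1..N} w"
    unfolding pair_max_sum_def by (rule sum_pairs_below_eq_half[OF _ inj]) (auto simp: max.commute)
  finally show ?thesis .
qed

lemma sorted_enumeration:
  fixes f :: "'a::linorder \<Rightarrow> 'b::linorder"
  assumes "finite M"
  obtains e where "bij_betw e {..<card M} M" "\<And>k l. k \<le> l \<Longrightarrow> l < card M \<Longrightarrow> f (e k) \<le> f (e l)"
proof -
  define xs where "xs = sort_key f (sorted_list_of_set M)"
  have "distinct xs" "set xs = M" "length xs = card M" "sorted (map f xs)"
    using assms unfolding xs_def by (auto simp: distinct_card[symmetric])
  then show ?thesis
    by (intro that[of "(!) xs"] bij_betw_nth) (auto simp: sorted_iff_nth_mono)
qed

lemma sorting_permutation:
  fixes w :: "nat \<Rightarrow> real"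
  obtains p where "p permutes {1..N}" "\<And>i j. i \<in> {1..N} \<Longrightarrow> j \<in> {1..N} \<Longrightarrow> p j < p i \<Longrightarrow> w j \<le> w i"
proof -
  obtain e where e: "bij_betw e {..<N} {1..N}" and mono: "\<And>k l. k \<le> l \<Longrightarrow> l < N \<Longrightarrow> w (e k) \<le> w (e l)"
    using sorted_enumeration[of "{1..N}" w] by auto
  define q where "q k = (if k \<in> {1..N} then e (k - 1) else k)" for k
  have "bij_betw (\<lambda>k. k - 1) {1..N} {..<N}"
    by (rule bij_betw_byWitness[where f'="\<lambda>k. k + 1"]) auto
  then have "bij_betw (e \<circ> (\<lambda>k. k - 1)) {1..N} {1..N}" using e by (rule bij_betw_trans)
  moreover have "(e \<circ> (\<lambda>k. k - 1)) k = q k" if "k \<in> {1..N}" for k using that by (simp add: q_def)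
  ultimately have "bij_betw q {1..N} {1..N}" using bij_betw_cong by blast
  then have q: "q permutes {1..N}" by (rule bij_imp_permutes) (auto simp: q_def)
  show ?thesis
  proof (rule that[of "inv q"])
    show "inv q permutes {1..N}" using q by (rule permutes_inv)
    fix i j assume i: "i \<in> {1..N}" and j: "j \<in> {1..N}" and less: "inv q j < inv q i"
    have "inv q i \<in> {1..N}" "inv q j \<in> {1..N}"
      using permutes_in_image[OF permutes_inv[OF q]] i j by auto
    moreover have "q (inv q i) = i" "q (inv q j) = j" using permutes_inverses(1)[OF q] by auto
    moreover have "w (e (inv q j - 1)) \<le> w (e (inv q i - 1))" using mono less calculation(1,2) by auto
    ultimately show "w j \<le> w i" unfolding q_def by auto
  qed
qed

text \<open>\<open>P\<close> is the set of rows that take the rising line \<open>f i + a i * (j - 1)\<close>; for fixed \<open>P\<close>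
  the best column assignment sorts the signed slopes, which produces \<open>pair_max_sum\<close>.\<close>

definition signed :: "(nat \<Rightarrow> real) \<Rightarrow> nat set \<Rightarrow> nat \<Rightarrow> real" where
  "signed a P i = (if i \<in> P then a i else - a i)"

definition subset_value :: "nat set \<Rightarrow> (nat \<Rightarrow> real) \<Rightarrow> (nat \<Rightarrow> real) \<Rightarrow> (nat \<Rightarrow> real) \<Rightarrow> nat set \<Rightarrow> real" where
  "subset_value I a f g P = (\<Sum>i\<in>I. if i \<in> P then f i else g i) + pair_max_sum I (signed a P)"

lemma updisc_eq_Max_subset_value:
  "updisc N (\<lambda>i j. max (f i + a i * (real j - 1)) (g i - a i * (real j - 1)))
   = Max (subset_value {1..N} a f g ` Pow {1..N})"
  (is "updisc N ?m = Max ?values")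
proof -
  let ?I = "{1..N::nat}"
  let ?sums = "(\<lambda>p. \<Sum>i\<in>?I. ?m i (p i)) ` {p. p permutes ?I}"
  have fin_sums: "finite ?sums" by (simp add: finite_permutations)
  have "Max ?sums \<le> Max ?values"
  proof (rule Max.boundedI[OF fin_sums])
    show "?sums \<noteq> {}" using permutes_id[of ?I] by blast
    fix x assume "x \<in> ?sums"
    then obtain p where p: "p permutes ?I" and x: "x = (\<Sum>i\<in>?I. ?m i (p i))" by blast
    define P where "P = {i\<in>?I. g i - a i * (real (p i) - 1) \<le> f i + a i * (real (p i) - 1)}"
    have "x = (\<Sum>i\<in>?I. (if i \<in> P then f i else g i) + signed a P i * (real (p i) - 1))"
      unfolding x by (intro sum.cong refl) (auto simp: P_def signed_def max_def algebra_simps)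
    also have "\<dots> \<le> subset_value ?I a f g P"
      unfolding subset_value_def sum.distrib using sum_rank_weight_le_pair_max_sum[OF p] by simp
    also have "\<dots> \<le> Max ?values" by (rule Max_ge) (auto simp: P_def)
    finally show "x \<le> Max ?values" .
  qed
  moreover have "Max ?values \<le> Max ?sums"
  proof (rule Max.boundedI)
    fix x assume "x \<in> ?values"
    then obtain P where x: "x = subset_value ?I a f g P" by blast
    obtain p where p: "p permutes ?I"
      and sorted: "\<And>i j. i \<in> ?I \<Longrightarrow> j \<in> ?I \<Longrightarrow> p j < p i \<Longrightarrow> signed a P j \<le> signed a P i"
      using sorting_permutation by blast
    have "x = (\<Sum>i\<in>?I. (if i \<in> P then f i else g i) + signed a P i * (real (p i) - 1))"
      unfolding x subset_value_def sum.distrib using sum_rank_weight_eq_pair_max_sum[OF p sorted] by simp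
    also have "\<dots> \<le> (\<Sum>i\<in>?I. ?m i (p i))"
      by (intro sum_mono) (auto simp: signed_def algebra_simps)
    also have "\<dots> \<le> Max ?sums" by (rule Max_ge[OF fin_sums]) (use p in blast)
    finally show "x \<le> Max ?sums" .
  qed auto
  ultimately show ?thesis unfolding updisc_def by simp
qed

section \<open>Pairs of subsets as walks\<close>

definition walk_of :: "(nat \<Rightarrow> nat) \<Rightarrow> nat set \<Rightarrow> nat \<Rightarrow> int" where
  "walk_of e U k = (\<Sum>l<k. if e l \<in> U then 1 else -1)"

lemma walk_of_Suc: "walk_of e U (Suc k) = walk_of e U k + (if e k \<in> U then 1 else -1)"
  by (simp add: walk_of_def)

lemma is_walk_walk_of: "is_walk n (walk_of e U)"
  by (simp add: is_walk_def walk_of_Suc walk_of_def)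

lemma walk_of_up_iff: "walk_of e U k < walk_of e U (Suc k) \<longleftrightarrow> e k \<in> U"
  by (simp add: walk_of_Suc)

lemma walk_of_surj:
  assumes e: "bij_betw e {..<n} M" and walk: "is_walk n h"
  obtains U where "U \<subseteq> M" "\<And>k. k \<le> n \<Longrightarrow> walk_of e U k = h k"
proof
  let ?U = "e ` {k. k < n \<and> h k < h (Suc k)}"
  show "?U \<subseteq> M" using e by (auto simp: bij_betw_def)
  have inj: "inj_on e {..<n}" using e by (simp add: bij_betw_def)
  show "walk_of e ?U k = h k" if "k \<le> n" for k
    using that
  proof (induction k)
    case 0
    then show ?case using walk by (simp add: walk_of_def is_walk_def)
  next
    case (Suc k)
    then have "k < n" by simp
    then have "e k \<in> ?U \<longleftrightarrow> h k < h (Suc k)"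
      using inj by (auto dest: inj_onD)
    with Suc is_walkD[OF walk \<open>k < n\<close>] show ?case by (auto simp: walk_of_Suc)
  qed
qed

definition pair_gain :: "(nat \<Rightarrow> real) \<Rightarrow> nat set \<Rightarrow> nat \<Rightarrow> nat \<Rightarrow> real" where
  "pair_gain a U i j = (if (i \<in> U) = (j \<in> U) then \<bar>a i - a j\<bar> else a i + a j)"

lemma pair_gain_commute: "pair_gain a U i j = pair_gain a U j i"
  by (auto simp: pair_gain_def abs_minus_commute)

lemma max_signed_add_max_signed:
  assumes "0 \<le> a i" "0 \<le> a j" "C \<inter> M = {}" "U \<subseteq> M"
  shows "max (signed a (C \<union> (M - U)) i) (signed a (C \<union> (M - U)) j) + max (signed a (C \<union> U) i) (signed a (C \<union> U) j)
    = (if i \<in> M \<and> j \<in> M then pair_gain a U i j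
       else max (signed a (C \<union> M) i) (signed a (C \<union> M) j) + max (signed a C i) (signed a C j))"
  using assms by (auto simp: signed_def pair_gain_def max_def abs_if)

lemma sum_pair_gain_eq_walk_value:
  assumes e: "bij_betw e {..<n} M" and decr: "\<And>k l. k \<le> l \<Longrightarrow> l < n \<Longrightarrow> a (e l) \<le> a (e k)"
  shows "(\<Sum>i\<in>M. \<Sum>j\<in>M - {i}. pair_gain a U i j) / 2
       = (\<Sum>k<n. \<Sum>l<k. a (e l)) + walk_value n (a \<circ> e) (\<lambda>_. 0) (\<lambda>_. 0) (walk_of e U)"
proof -
  have inj: "inj_on e {..<n}" and img: "e ` {..<n} = M" using e by (auto simp: bij_betw_def)
  have "(\<Sum>i\<in>M. \<Sum>j\<in>M - {i}. pair_gain a U i j) = (\<Sum>k<n. \<Sum>j\<in>M - {e k}. pair_gain a U (e k) j)"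
    using sum.reindex[OF inj, of "\<lambda>i. \<Sum>j\<in>M - {i}. pair_gain a U i j"] img by simp
  also have "\<dots> = (\<Sum>k<n. \<Sum>l\<in>{..<n} - {k}. pair_gain a U (e k) (e l))"
  proof (rule sum.cong[OF refl])
    fix k assume "k \<in> {..<n}"
    then have "M - {e k} = e ` ({..<n} - {k})" and "inj_on e ({..<n} - {k})"
      using inj img by (auto simp: inj_on_image_set_diff intro: inj_on_subset)
    then show "(\<Sum>j\<in>M - {e k}. pair_gain a U (e k) j) = (\<Sum>l\<in>{..<n} - {k}. pair_gain a U (e k) (e l))"
      by (simp add: sum.reindex)
  qed
  also have "\<dots> / 2 = (\<Sum>k<n. \<Sum>l\<in>{l\<in>{..<n}. l < k}. pair_gain a U (e k) (e l))"
    using sum_pairs_below_eq_half[of "{..<n}" id "\<lambda>k l. pair_gain a U (e k) (e l)"]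
    by (simp add: pair_gain_commute)
  also have "\<dots> = (\<Sum>k<n. (\<Sum>l<k. a (e l)) + walk_step (a \<circ> e) (\<lambda>_. 0) (\<lambda>_. 0) (walk_of e U) k)"
  proof (rule sum.cong[OF refl])
    fix k assume "k \<in> {..<n}"
    define s where "s l = (if e l \<in> U then 1 else -1 :: int)" for l
    have "{l\<in>{..<n}. l < k} = {..<k}" using \<open>k \<in> {..<n}\<close> by auto
    moreover have "pair_gain a U (e k) (e l) = a (e l) - a (e k) * of_int (s k * s l)" if "l < k" for l
      using decr[of l k] that \<open>k \<in> {..<n}\<close> by (auto simp: pair_gain_def s_def)
    ultimately have "(\<Sum>l\<in>{l\<in>{..<n}. l < k}. pair_gain a U (e k) (e l))
        = (\<Sum>l<k. a (e l)) - a (e k) * of_int (s k * (\<Sum>l<k. s l))"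
      by (simp add: sum_subtractf sum_distrib_left)
    also have "\<dots> = (\<Sum>l<k. a (e l)) + walk_step (a \<circ> e) (\<lambda>_. 0) (\<lambda>_. 0) (walk_of e U) k"
      by (simp add: walk_step_def walk_of_Suc walk_of_def s_def)
    finally show "(\<Sum>l\<in>{l\<in>{..<n}. l < k}. pair_gain a U (e k) (e l))
        = (\<Sum>l<k. a (e l)) + walk_step (a \<circ> e) (\<lambda>_. 0) (\<lambda>_. 0) (walk_of e U) k" .
  qed
  finally show ?thesis by (simp add: walk_value_def sum.distrib)
qed

lemma sum_offdiag_restrict:
  assumes "finite I" and "M \<subseteq> I"
  shows "(\<Sum>i\<in>I. \<Sum>j\<in>I - {i}. if i \<in> M \<and> j \<in> M then G i j else 0) = (\<Sum>i\<in>M. \<Sum>j\<in>M - {i}. G i j)"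
proof -
  have "(\<Sum>i\<in>I. \<Sum>j\<in>I - {i}. if i \<in> M \<and> j \<in> M then G i j else 0)
      = (\<Sum>i\<in>I. if i \<in> M then \<Sum>j\<in>M - {i}. G i j else 0)"
  proof (rule sum.cong[OF refl])
    fix i assume "i \<in> I"
    have "(I - {i}) \<inter> M = M - {i}" using assms(2) by auto
    then show "(\<Sum>j\<in>I - {i}. if i \<in> M \<and> j \<in> M then G i j else 0) = (if i \<in> M then \<Sum>j\<in>M - {i}. G i j else 0)"
      using assms(1) sum.inter_restrict[of "I - {i}" "G i" M] by simp
  qed
  also have "\<dots> = (\<Sum>i\<in>M. \<Sum>j\<in>M - {i}. G i j)"
    using assms by (simp add: sum.inter_restrict[symmetric] Int_absorb1)
  finally show ?thesis .
qed

text \<open>\<open>R\<close> collects the pairs not contained in \<open>M\<close>, whose contribution does not depend on \<open>U\<close>.\<close>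

lemma pair_max_sum_signed_pair:
  assumes a_nonneg: "\<And>i. 0 \<le> a i" and "C \<inter> M = {}" "M \<subseteq> I" "finite I"
    and e: "bij_betw e {..<n} M" and decr: "\<And>k l. k \<le> l \<Longrightarrow> l < n \<Longrightarrow> a (e l) \<le> a (e k)"
  obtains R where "\<And>U. U \<subseteq> M \<Longrightarrow> pair_max_sum I (signed a (C \<union> (M - U))) + pair_max_sum I (signed a (C \<union> U))
      = R + walk_value n (a \<circ> e) (\<lambda>_. 0) (\<lambda>_. 0) (walk_of e U)"
proof
  define outer where "outer i j = max (signed a (C \<union> M) i) (signed a (C \<union> M) j) + max (signed a C i) (signed a C j)"
    for i j
  fix U assume "U \<subseteq> M"
  have "pair_max_sum I (signed a (C \<union> (M - U))) + pair_max_sum I (signed a (C \<union> U))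
      = (\<Sum>i\<in>I. \<Sum>j\<in>I - {i}. (if i \<in> M \<and> j \<in> M then pair_gain a U i j else 0)
                                  + (if i \<in> M \<and> j \<in> M then 0 else outer i j)) / 2"
    unfolding pair_max_sum_def add_divide_distrib[symmetric] sum.distrib[symmetric]
    using max_signed_add_max_signed[OF a_nonneg a_nonneg \<open>C \<inter> M = {}\<close> \<open>U \<subseteq> M\<close>]
    by (intro arg_cong[where f="\<lambda>x. x / 2"] sum.cong refl) (simp add: outer_def)
  also have "\<dots> = (\<Sum>i\<in>M. \<Sum>j\<in>M - {i}. pair_gain a U i j) / 2
      + (\<Sum>i\<in>I. \<Sum>j\<in>I - {i}. if i \<in> M \<and> j \<in> M then 0 else outer i j) / 2"
    using sum_offdiag_restrict[OF \<open>finite I\<close> \<open>M \<subseteq> I\<close>, of "pair_gain a U"]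
    by (simp add: sum.distrib add_divide_distrib)
  finally show "pair_max_sum I (signed a (C \<union> (M - U))) + pair_max_sum I (signed a (C \<union> U))
      = ((\<Sum>i\<in>I. \<Sum>j\<in>I - {i}. if i \<in> M \<and> j \<in> M then 0 else outer i j) / 2 + (\<Sum>k<n. \<Sum>l<k. a (e l)))
        + walk_value n (a \<circ> e) (\<lambda>_. 0) (\<lambda>_. 0) (walk_of e U)"
    using sum_pair_gain_eq_walk_value[where a=a, OF e decr, of U] by simp
qed

lemma sum_three_part_cover:
  assumes "finite I" "C \<subseteq> I" "M \<subseteq> I" "C \<inter> M = {}"
  shows "(\<Sum>i\<in>I. \<phi> i) = (\<Sum>i\<in>C. \<phi> i) + (\<Sum>i\<in>M. \<phi> i) + (\<Sum>i\<in>I - (C \<union> M). \<phi> i)"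
proof -
  have "(\<Sum>i\<in>I. \<phi> i) = (\<Sum>i\<in>I - (C \<union> M). \<phi> i) + (\<Sum>i\<in>C \<union> M. \<phi> i)"
    using assms by (intro sum.subset_diff) auto
  also have "(\<Sum>i\<in>C \<union> M. \<phi> i) = (\<Sum>i\<in>C. \<phi> i) + (\<Sum>i\<in>M. \<phi> i)"
    using assms by (intro sum.union_disjoint) (auto intro: finite_subset)
  finally show ?thesis by (simp add: ac_simps)
qed

lemma subset_value_pair_eq:
  assumes pair: "pair_max_sum I (signed a (C \<union> (M - U))) + pair_max_sum I (signed a (C \<union> U))
      = R + walk_value n (a \<circ> e) (\<lambda>_. 0) (\<lambda>_. 0) (walk_of e U)"
    and "C \<inter> M = {}" "U \<subseteq> M" "M \<subseteq> I" "C \<subseteq> I" "finite I" and e: "bij_betw e {..<n} M"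
  shows "subset_value I a f1 f2 (C \<union> (M - U)) + subset_value I a g1 g2 (C \<union> U)
    = R + (\<Sum>i\<in>C. f1 i + g1 i) + (\<Sum>i\<in>I - (C \<union> M). f2 i + g2 i)
      + walk_value n (a \<circ> e) (\<lambda>k. f2 (e k) + g1 (e k)) (\<lambda>k. f1 (e k) + g2 (e k)) (walk_of e U)"
proof -
  have inj: "inj_on e {..<n}" and img: "e ` {..<n} = M" using e by (auto simp: bij_betw_def)
  have split: "(\<Sum>i\<in>I. \<phi> i) = (\<Sum>i\<in>C. \<phi> i) + (\<Sum>i\<in>M. \<phi> i) + (\<Sum>i\<in>I - (C \<union> M). \<phi> i)" for \<phi>
    using assms by (intro sum_three_part_cover)
  define \<phi> where "\<phi> i = (if i \<in> C \<union> (M - U) then f1 i else f2 i) + (if i \<in> C \<union> U then g1 i else g2 i)" for i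
  have parts: "(\<Sum>i\<in>C. \<phi> i) = (\<Sum>i\<in>C. f1 i + g1 i)"
    "(\<Sum>i\<in>M. \<phi> i) = (\<Sum>i\<in>M. if i \<in> U then f2 i + g1 i else f1 i + g2 i)"
    using assms by (auto intro!: sum.cong simp: \<phi>_def)
  have "(\<Sum>i\<in>I - (C \<union> M). \<phi> i) = (\<Sum>i\<in>I - (C \<union> M). f2 i + g2 i)"
  proof (rule sum.cong[OF refl])
    fix i assume "i \<in> I - (C \<union> M)"
    then have "i \<notin> C" "i \<notin> M" "i \<notin> U" using \<open>U \<subseteq> M\<close> by auto
    then show "\<phi> i = f2 i + g2 i" by (simp add: \<phi>_def)
  qed
  note parts = parts this
  have "(\<Sum>i\<in>I. if i \<in> C \<union> (M - U) then f1 i else f2 i) + (\<Sum>i\<in>I. if i \<in> C \<union> U then g1 i else g2 i)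
      = (\<Sum>i\<in>C. \<phi> i) + (\<Sum>i\<in>M. \<phi> i) + (\<Sum>i\<in>I - (C \<union> M). \<phi> i)"
    unfolding split[of \<phi>, symmetric] unfolding \<phi>_def sum.distrib ..
  also have "\<dots> = (\<Sum>i\<in>C. f1 i + g1 i) + (\<Sum>i\<in>M. if i \<in> U then f2 i + g1 i else f1 i + g2 i)
        + (\<Sum>i\<in>I - (C \<union> M). f2 i + g2 i)"
    unfolding parts ..
  also have "(\<Sum>i\<in>M. if i \<in> U then f2 i + g1 i else f1 i + g2 i)
      = (\<Sum>k<n. if walk_of e U k < walk_of e U (Suc k) then f2 (e k) + g1 (e k) else f1 (e k) + g2 (e k))"
    unfolding walk_of_up_iff img[symmetric] sum.reindex[OF inj] by simp
  finally show ?thesis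
    using pair walk_value_split_rewards[of n "a \<circ> e" "\<lambda>k. f2 (e k) + g1 (e k)"
        "\<lambda>k. f1 (e k) + g2 (e k)" "walk_of e U"]
    unfolding subset_value_def by linarith
qed

section \<open>The Toda identity for maxima over pairs of subsets\<close>

lemma Max_add_Max:
  fixes F G :: "'a \<Rightarrow> 'b::linordered_ab_group_add"
  assumes "finite S" "S \<noteq> {}" "finite T" "T \<noteq> {}"
  shows "Max (F ` S) + Max (G ` T) = Max ((\<lambda>(s, t). F s + G t) ` (S \<times> T))"
proof (rule antisym)
  have "Max (F ` S) \<in> F ` S" "Max (G ` T) \<in> G ` T" using assms by simp_all
  then obtain s t where "s \<in> S" "Max (F ` S) = F s" "t \<in> T" "Max (G ` T) = G t" by blast
  moreover have "F s + G t \<in> (\<lambda>(s, t). F s + G t) ` (S \<times> T)"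
    using \<open>s \<in> S\<close> \<open>t \<in> T\<close> by force
  ultimately show "Max (F ` S) + Max (G ` T) \<le> Max ((\<lambda>(s, t). F s + G t) ` (S \<times> T))"
    using assms by simp
  show "Max ((\<lambda>(s, t). F s + G t) ` (S \<times> T)) \<le> Max (F ` S) + Max (G ` T)"
  proof (rule Max.boundedI)
    fix v assume "v \<in> (\<lambda>(s, t). F s + G t) ` (S \<times> T)"
    then obtain s t where "s \<in> S" "t \<in> T" "v = F s + G t" by auto
    then show "v \<le> Max (F ` S) + Max (G ` T)" using assms by (simp add: add_mono)
  qed (use assms in auto)
qed

lemma Max_eq_max_Max_if_dominated:
  fixes x y z :: "'a \<Rightarrow> 'b::linorder"
  assumes fin: "finite S" and "S \<noteq> {}"
    and y_le: "\<And>s. s \<in> S \<Longrightarrow> \<exists>t\<in>S. y s \<le> x t"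
    and z_le: "\<And>s. s \<in> S \<Longrightarrow> \<exists>t\<in>S. z s \<le> x t"
    and x_le: "\<And>s. s \<in> S \<Longrightarrow> \<exists>t\<in>S. x s \<le> y t \<or> x s \<le> z t"
  shows "Max (x ` S) = max (Max (y ` S)) (Max (z ` S))"
proof -
  have bounded: "Max (w ` S) \<le> Max (v ` S)" if dom: "\<And>s. s \<in> S \<Longrightarrow> \<exists>t\<in>S. w s \<le> v t"
    for v w :: "'a \<Rightarrow> 'b"
  proof (rule Max.boundedI)
    fix m assume "m \<in> w ` S"
    then obtain s t where "m = w s" "t \<in> S" "w s \<le> v t" using dom by blast
    moreover have "v t \<le> Max (v ` S)" using fin \<open>t \<in> S\<close> by simp
    ultimately show "m \<le> Max (v ` S)" by (metis order_trans)
  qed (use fin \<open>S \<noteq> {}\<close> in auto)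
  have "Max (x ` S) \<le> Max ((\<lambda>s. max (y s) (z s)) ` S)"
  proof (rule bounded)
    fix s assume "s \<in> S"
    then obtain t where "t \<in> S" "x s \<le> y t \<or> x s \<le> z t" using x_le by blast
    then show "\<exists>t\<in>S. x s \<le> max (y t) (z t)" by (auto simp: le_max_iff_disj)
  qed
  also have "Max ((\<lambda>s. max (y s) (z s)) ` S) \<le> max (Max (y ` S)) (Max (z ` S))"
  proof (rule Max.boundedI)
    fix m assume "m \<in> (\<lambda>s. max (y s) (z s)) ` S"
    then obtain s where "s \<in> S" "m = max (y s) (z s)" by blast
    moreover have "y s \<le> Max (y ` S)" "z s \<le> Max (z ` S)" using fin \<open>s \<in> S\<close> by simp_all
    ultimately show "m \<le> max (Max (y ` S)) (Max (z ` S))" by (simp add: max.coboundedI1 max.coboundedI2)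
  qed (use fin \<open>S \<noteq> {}\<close> in auto)
  finally show ?thesis
    using bounded[OF y_le] bounded[OF z_le] by (simp add: antisym)
qed

locale toda_pair_values =
  fixes I :: "nat set" and a f g :: "nat \<Rightarrow> real" and \<delta> \<epsilon> :: real
  assumes finite_I: "finite I" and a_nonneg: "\<And>i. 0 \<le> a i" and \<delta>_pos: "0 < \<delta>" and \<epsilon>_pos: "0 < \<epsilon>"
begin

text \<open>With \<open>f\<close>, \<open>g\<close> the intercepts at \<open>(l, m, n)\<close>, the sums \<open>\<tau>(l, m - 1, n) + \<tau>(l + 1, m, n)\<close>,
  \<open>\<tau>(l, m, n) + \<tau>(l + 1, m - 1, n)\<close> and \<open>\<tau>(l, m - 1, n + 1) + \<tau>(l + 1, m, n - 1)\<close> are the maxima of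
  \<open>xval\<close>, \<open>yval\<close> and \<open>zval\<close> over pairs of subsets.\<close>

definition xval :: "nat set \<Rightarrow> nat set \<Rightarrow> real" where
  "xval P Q = subset_value I a f (\<lambda>i. g i + max 0 (a i - \<epsilon>)) P
              + subset_value I a (\<lambda>i. f i + max 0 (a i - \<delta>)) g Q"

definition yval :: "nat set \<Rightarrow> nat set \<Rightarrow> real" where
  "yval P Q = subset_value I a f g P
              + subset_value I a (\<lambda>i. f i + max 0 (a i - \<delta>)) (\<lambda>i. g i + max 0 (a i - \<epsilon>)) Q"

definition zval :: "nat set \<Rightarrow> nat set \<Rightarrow> real" where
  "zval P Q = subset_value I a (\<lambda>i. f i + a i) (\<lambda>i. g i + max 0 (a i - \<epsilon>) - a i) P
              + subset_value I a (\<lambda>i. f i + max 0 (a i - \<delta>) - a i) (\<lambda>i. g i + a i) Q"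

definition walk_x :: "nat \<Rightarrow> (nat \<Rightarrow> real) \<Rightarrow> (nat \<Rightarrow> int) \<Rightarrow> real" where
  "walk_x n \<alpha> h = walk_value n \<alpha> (\<lambda>k. max 0 (\<alpha> k - \<delta>) + max 0 (\<alpha> k - \<epsilon>)) (\<lambda>_. 0) h"

definition walk_y :: "nat \<Rightarrow> (nat \<Rightarrow> real) \<Rightarrow> (nat \<Rightarrow> int) \<Rightarrow> real" where
  "walk_y n \<alpha> h = walk_value n \<alpha> (\<lambda>k. max 0 (\<alpha> k - \<delta>)) (\<lambda>k. max 0 (\<alpha> k - \<epsilon>)) h"

lemma pair_values_eq_walk_values:
  assumes "C \<inter> M = {}" "M \<subseteq> I" "C \<subseteq> I" and e: "bij_betw e {..<n} M" and "U \<subseteq> M"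
    and pair: "pair_max_sum I (signed a (C \<union> (M - U))) + pair_max_sum I (signed a (C \<union> U))
      = R + walk_value n (a \<circ> e) (\<lambda>_. 0) (\<lambda>_. 0) (walk_of e U)"
  defines "K \<equiv> R + (\<Sum>i\<in>C. 2 * f i + max 0 (a i - \<delta>)) + (\<Sum>i\<in>I - (C \<union> M). 2 * g i + max 0 (a i - \<epsilon>))
             + (\<Sum>k<n. f (e k) + g (e k))"
  shows "xval (C \<union> (M - U)) (C \<union> U) = K + walk_x n (a \<circ> e) (walk_of e U)"
    and "yval (C \<union> (M - U)) (C \<union> U) = K + walk_y n (a \<circ> e) (walk_of e U)"
    and "zval (C \<union> (M - U)) (C \<union> U) = K + walk_x n (a \<circ> e) (\<lambda>k. walk_of e U k + 2)"
proof -
  note pair_split = subset_value_pair_eq[OF pair assms(1,5,2,3) finite_I e]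
  let ?c = "\<lambda>k. f (e k) + g (e k)"
  show "xval (C \<union> (M - U)) (C \<union> U) = K + walk_x n (a \<circ> e) (walk_of e U)"
    unfolding xval_def walk_x_def pair_split K_def
    by (subst walk_value_offset[where c="?c"]) (simp_all add: algebra_simps)
  show "yval (C \<union> (M - U)) (C \<union> U) = K + walk_y n (a \<circ> e) (walk_of e U)"
    unfolding yval_def walk_y_def pair_split K_def
    by (subst walk_value_offset[where c="?c"]) (simp_all add: algebra_simps)
  have "walk_x n (a \<circ> e) (\<lambda>k. walk_of e U k + 2)
      = walk_value n (a \<circ> e) (\<lambda>k. max 0 (a (e k) - \<delta>) + max 0 (a (e k) - \<epsilon>) - 2 * a (e k)) (\<lambda>k. 2 * a (e k))
          (walk_of e U)"
    using walk_value_shift[OF is_walk_walk_of, of n "a \<circ> e" _ _ e U 2] by (simp add: walk_x_def)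
  then show "zval (C \<union> (M - U)) (C \<union> U) = K + walk_x n (a \<circ> e) (\<lambda>k. walk_of e U k + 2)"
    unfolding zval_def pair_split K_def
    by (subst walk_value_offset[where c="?c"]) (simp_all add: algebra_simps)
qed

lemma pair_values_as_walks:
  assumes "P \<subseteq> I" "Q \<subseteq> I"
  obtains \<alpha> n h\<^sub>0 K where "\<And>k. 0 \<le> \<alpha> k" "\<And>k. Suc k < n \<Longrightarrow> \<alpha> (Suc k) \<le> \<alpha> k" "is_walk n h\<^sub>0"
    "xval P Q = K + walk_x n \<alpha> h\<^sub>0" "yval P Q = K + walk_y n \<alpha> h\<^sub>0" "zval P Q = K + walk_x n \<alpha> (\<lambda>k. h\<^sub>0 k + 2)"
    "\<And>h. is_walk n h \<Longrightarrow> \<exists>P'\<subseteq>I. \<exists>Q'\<subseteq>I. xval P' Q' = K + walk_x n \<alpha> h \<and> yval P' Q' = K + walk_y n \<alpha> h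
                                         \<and> zval P' Q' = K + walk_x n \<alpha> (\<lambda>k. h k + 2)"
proof -
  define C M U\<^sub>0 where "C = P \<inter> Q" and "M = (P - Q) \<union> (Q - P)" and "U\<^sub>0 = Q - P"
  have CM: "C \<inter> M = {}" "M \<subseteq> I" "C \<subseteq> I" and "U\<^sub>0 \<subseteq> M"
    and PQ: "P = C \<union> (M - U\<^sub>0)" "Q = C \<union> U\<^sub>0"
    using assms unfolding C_def M_def U\<^sub>0_def by auto
  define n where "n = card M"
  obtain e where e: "bij_betw e {..<n} M" and sorted: "\<And>k l. k \<le> l \<Longrightarrow> l < n \<Longrightarrow> - a (e k) \<le> - a (e l)"
    using sorted_enumeration[of M "\<lambda>i. - a i"] finite_subset[OF \<open>M \<subseteq> I\<close> finite_I] unfolding n_def by blast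
  have decr: "a (e l) \<le> a (e k)" if "k \<le> l" "l < n" for k l
    using sorted[OF that] by simp
  obtain R where pair: "\<And>U. U \<subseteq> M \<Longrightarrow> pair_max_sum I (signed a (C \<union> (M - U))) + pair_max_sum I (signed a (C \<union> U))
      = R + walk_value n (a \<circ> e) (\<lambda>_. 0) (\<lambda>_. 0) (walk_of e U)"
    using pair_max_sum_signed_pair[where a=a, OF a_nonneg CM(1,2) finite_I e decr] by blast
  define K where "K = R + (\<Sum>i\<in>C. 2 * f i + max 0 (a i - \<delta>)) + (\<Sum>i\<in>I - (C \<union> M). 2 * g i + max 0 (a i - \<epsilon>))
             + (\<Sum>k<n. f (e k) + g (e k))"
  note walk_values = pair_values_eq_walk_values[OF CM e _ pair, folded K_def]
  show ?thesis
  proof (rule that[of "a \<circ> e" n "walk_of e U\<^sub>0" K])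
    show "0 \<le> (a \<circ> e) k" for k using a_nonneg by simp
    show "(a \<circ> e) (Suc k) \<le> (a \<circ> e) k" if "Suc k < n" for k using decr[of k "Suc k"] that by simp
    show "is_walk n (walk_of e U\<^sub>0)" by (rule is_walk_walk_of)
    show "xval P Q = K + walk_x n (a \<circ> e) (walk_of e U\<^sub>0)" "yval P Q = K + walk_y n (a \<circ> e) (walk_of e U\<^sub>0)"
      "zval P Q = K + walk_x n (a \<circ> e) (\<lambda>k. walk_of e U\<^sub>0 k + 2)"
      unfolding PQ using walk_values[OF \<open>U\<^sub>0 \<subseteq> M\<close> \<open>U\<^sub>0 \<subseteq> M\<close>] by simp_all
    fix h assume "is_walk n h"
    then obtain U where "U \<subseteq> M" and U: "\<And>k. k \<le> n \<Longrightarrow> walk_of e U k = h k"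
      using walk_of_surj[OF e] by blast
    have "C \<union> (M - U) \<subseteq> I" "C \<union> U \<subseteq> I" using CM \<open>U \<subseteq> M\<close> by auto
    moreover have "walk_x n (a \<circ> e) (walk_of e U) = walk_x n (a \<circ> e) h"
      "walk_y n (a \<circ> e) (walk_of e U) = walk_y n (a \<circ> e) h"
      "walk_x n (a \<circ> e) (\<lambda>k. walk_of e U k + 2) = walk_x n (a \<circ> e) (\<lambda>k. h k + 2)"
      unfolding walk_x_def walk_y_def using U by (auto intro!: walk_value_cong)
    ultimately show "\<exists>P'\<subseteq>I. \<exists>Q'\<subseteq>I. xval P' Q' = K + walk_x n (a \<circ> e) h \<and> yval P' Q' = K + walk_y n (a \<circ> e) h
        \<and> zval P' Q' = K + walk_x n (a \<circ> e) (\<lambda>k. h k + 2)"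
      using walk_values[OF \<open>U \<subseteq> M\<close> \<open>U \<subseteq> M\<close>] by metis
  qed
qed

lemma pair_values_dominance:
  assumes "P \<subseteq> I" "Q \<subseteq> I"
  shows "\<exists>P'\<subseteq>I. \<exists>Q'\<subseteq>I. yval P Q \<le> xval P' Q'"
    and "\<exists>P'\<subseteq>I. \<exists>Q'\<subseteq>I. zval P Q - \<delta> - \<epsilon> \<le> xval P' Q'"
    and "\<exists>P'\<subseteq>I. \<exists>Q'\<subseteq>I. xval P Q \<le> yval P' Q' \<or> xval P Q \<le> zval P' Q' - \<delta> - \<epsilon>"
proof -
  obtain \<alpha> n h\<^sub>0 K where \<alpha>_nonneg: "\<And>k. 0 \<le> \<alpha> k" and \<alpha>_decr: "\<And>k. Suc k < n \<Longrightarrow> \<alpha> (Suc k) \<le> \<alpha> k"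
    and walk: "is_walk n h\<^sub>0"
    and x: "xval P Q = K + walk_x n \<alpha> h\<^sub>0" and y: "yval P Q = K + walk_y n \<alpha> h\<^sub>0"
    and z: "zval P Q = K + walk_x n \<alpha> (\<lambda>k. h\<^sub>0 k + 2)"
    and realize: "\<And>h. is_walk n h \<Longrightarrow> \<exists>P'\<subseteq>I. \<exists>Q'\<subseteq>I. xval P' Q' = K + walk_x n \<alpha> h
        \<and> yval P' Q' = K + walk_y n \<alpha> h \<and> zval P' Q' = K + walk_x n \<alpha> (\<lambda>k. h k + 2)"
    using pair_values_as_walks[OF assms] by blast
  have "walk_y n \<alpha> h\<^sub>0 \<le> walk_x n \<alpha> (\<lambda>k. \<bar>h\<^sub>0 k\<bar>)"
    unfolding walk_x_def walk_y_def using \<alpha>_decr by (intro walk_value_le_abs walk max.mono) auto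
  moreover obtain P' Q' where "P' \<subseteq> I" "Q' \<subseteq> I" "xval P' Q' = K + walk_x n \<alpha> (\<lambda>k. \<bar>h\<^sub>0 k\<bar>)"
    using realize[OF is_walk_abs[OF walk]] by blast
  ultimately show "\<exists>P'\<subseteq>I. \<exists>Q'\<subseteq>I. yval P Q \<le> xval P' Q'"
    using y by (intro exI[of _ P'] exI[of _ Q']) auto
  have "walk_x n \<alpha> (\<lambda>k. h\<^sub>0 k + 2) - \<delta> - \<epsilon> \<le> walk_x n \<alpha> (\<lambda>k. 1 - \<bar>h\<^sub>0 k + 1\<bar>)"
    unfolding walk_x_def by (rule walk_value_fold[where \<alpha>=\<alpha>, OF walk \<alpha>_nonneg \<alpha>_decr \<delta>_pos \<epsilon>_pos])
  moreover obtain P' Q' where "P' \<subseteq> I" "Q' \<subseteq> I" "xval P' Q' = K + walk_x n \<alpha> (\<lambda>k. 1 - \<bar>h\<^sub>0 k + 1\<bar>)"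
    using realize[OF is_walk_fold[OF walk]] by blast
  ultimately show "\<exists>P'\<subseteq>I. \<exists>Q'\<subseteq>I. zval P Q - \<delta> - \<epsilon> \<le> xval P' Q'"
    using z by (intro exI[of _ P'] exI[of _ Q']) auto
  obtain h' where "is_walk n h'"
    "walk_x n \<alpha> h\<^sub>0 \<le> walk_y n \<alpha> h' \<or> walk_x n \<alpha> h\<^sub>0 \<le> walk_x n \<alpha> (\<lambda>k. h' k + 2) - \<delta> - \<epsilon>"
    unfolding walk_x_def walk_y_def
    by (rule walk_value_dominated[where \<alpha>=\<alpha>, OF walk \<alpha>_nonneg \<alpha>_decr \<delta>_pos \<epsilon>_pos])
  moreover obtain P' Q' where "P' \<subseteq> I" "Q' \<subseteq> I"
    "yval P' Q' = K + walk_y n \<alpha> h'" "zval P' Q' = K + walk_x n \<alpha> (\<lambda>k. h' k + 2)"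
    using realize[OF \<open>is_walk n h'\<close>] by blast
  ultimately show "\<exists>P'\<subseteq>I. \<exists>Q'\<subseteq>I. xval P Q \<le> yval P' Q' \<or> xval P Q \<le> zval P' Q' - \<delta> - \<epsilon>"
    using x by (intro exI[of _ P'] exI[of _ Q']) auto
qed

lemma Max_subset_value_toda:
  "Max (subset_value I a f (\<lambda>i. g i + max 0 (a i - \<epsilon>)) ` Pow I)
     + Max (subset_value I a (\<lambda>i. f i + max 0 (a i - \<delta>)) g ` Pow I)
   = max (Max (subset_value I a f g ` Pow I)
            + Max (subset_value I a (\<lambda>i. f i + max 0 (a i - \<delta>)) (\<lambda>i. g i + max 0 (a i - \<epsilon>)) ` Pow I))
         (Max (subset_value I a (\<lambda>i. f i + a i) (\<lambda>i. g i + max 0 (a i - \<epsilon>) - a i) ` Pow I)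
            + Max (subset_value I a (\<lambda>i. f i + max 0 (a i - \<delta>) - a i) (\<lambda>i. g i + a i) ` Pow I) - \<delta> - \<epsilon>)"
proof -
  let ?S = "Pow I \<times> Pow I"
  have fin: "finite ?S" "?S \<noteq> {}" and fin_Pow: "finite (Pow I)" "Pow I \<noteq> {}" using finite_I by auto
  have "Max ((\<lambda>(P, Q). xval P Q) ` ?S)
      = max (Max ((\<lambda>(P, Q). yval P Q) ` ?S)) (Max ((\<lambda>s. (\<lambda>(P, Q). zval P Q) s + (- \<delta> - \<epsilon>)) ` ?S))"
  proof (rule Max_eq_max_Max_if_dominated[OF fin])
    fix s assume "s \<in> ?S"
    then obtain P Q where s: "s = (P, Q)" "P \<subseteq> I" "Q \<subseteq> I" by auto
    obtain P' Q' where "P' \<subseteq> I" "Q' \<subseteq> I" "yval P Q \<le> xval P' Q'"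
      using pair_values_dominance(1)[OF s(2,3)] by blast
    then show "\<exists>t\<in>?S. (\<lambda>(P, Q). yval P Q) s \<le> (\<lambda>(P, Q). xval P Q) t"
      using s(1) by (intro bexI[of _ "(P', Q')"]) auto
    obtain P' Q' where "P' \<subseteq> I" "Q' \<subseteq> I" "zval P Q - \<delta> - \<epsilon> \<le> xval P' Q'"
      using pair_values_dominance(2)[OF s(2,3)] by blast
    then show "\<exists>t\<in>?S. (\<lambda>(P, Q). zval P Q) s + (- \<delta> - \<epsilon>) \<le> (\<lambda>(P, Q). xval P Q) t"
      using s(1) by (intro bexI[of _ "(P', Q')"]) auto
    obtain P' Q' where "P' \<subseteq> I" "Q' \<subseteq> I" "xval P Q \<le> yval P' Q' \<or> xval P Q \<le> zval P' Q' - \<delta> - \<epsilon>"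
      using pair_values_dominance(3)[OF s(2,3)] by blast
    then show "\<exists>t\<in>?S. (\<lambda>(P, Q). xval P Q) s \<le> (\<lambda>(P, Q). yval P Q) t
        \<or> (\<lambda>(P, Q). xval P Q) s \<le> (\<lambda>(P, Q). zval P Q) t + (- \<delta> - \<epsilon>)"
      using s(1) by (intro bexI[of _ "(P', Q')"]) auto
  qed
  also have "\<dots> = max (Max ((\<lambda>(P, Q). yval P Q) ` ?S)) (Max ((\<lambda>(P, Q). zval P Q) ` ?S) - \<delta> - \<epsilon>)"
    by (simp only: Max_add_commute[OF fin])
  finally show ?thesis
    unfolding Max_add_Max[OF fin_Pow fin_Pow] xval_def[symmetric] yval_def[symmetric] zval_def[symmetric] .
qed

end

section \<open>The tau function\<close>

definition tau_rise :: "real \<Rightarrow> (nat \<Rightarrow> real) \<Rightarrow> (nat \<Rightarrow> real) \<Rightarrow> (nat \<Rightarrow> real) \<Rightarrow> int \<Rightarrow> int \<Rightarrow> nat \<Rightarrow> real" where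
  "tau_rise \<delta> r c c' l n i = max 0 (\<bar>r i\<bar> - \<delta>) * of_int l + \<bar>r i\<bar> * of_int n + (if 0 \<le> r i then c i else c' i)"

definition tau_fall :: "real \<Rightarrow> (nat \<Rightarrow> real) \<Rightarrow> (nat \<Rightarrow> real) \<Rightarrow> (nat \<Rightarrow> real) \<Rightarrow> int \<Rightarrow> int \<Rightarrow> nat \<Rightarrow> real" where
  "tau_fall \<epsilon> r c c' m n i = - max 0 (\<bar>r i\<bar> - \<epsilon>) * of_int m - \<bar>r i\<bar> * of_int n + (if 0 \<le> r i then c' i else c i)"

lemma phi_eq_max_rise_fall:
  assumes "\<delta> > 0" and "\<epsilon> > 0"
  shows "phi \<delta> \<epsilon> (r i) (c i) (c' i) l m (n + int j - 1)
    = max (tau_rise \<delta> r c c' l n i + \<bar>r i\<bar> * (real j - 1)) (tau_fall \<epsilon> r c c' m n i - \<bar>r i\<bar> * (real j - 1))"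
proof (cases "0 \<le> r i")
  case True
  then have "max 0 (- r i - \<epsilon>) = 0" "max 0 (- r i - \<delta>) = 0" using assms by auto
  with True show ?thesis
    unfolding phi_def eta_def eta'_def tau_rise_def tau_fall_def by (simp add: algebra_simps)
next
  case False
  then have "max 0 (r i - \<epsilon>) = 0" "max 0 (r i - \<delta>) = 0" using assms by auto
  with False show ?thesis
    unfolding phi_def eta_def eta'_def tau_rise_def tau_fall_def by (simp add: algebra_simps max.commute)
qed

lemma tau_eq_Max_subset_value:
  assumes "\<delta> > 0" and "\<epsilon> > 0"
  shows "tau N \<delta> \<epsilon> r c c' l m n
       = Max (subset_value {1..N} (\<lambda>i. \<bar>r i\<bar>) (tau_rise \<delta> r c c' l n) (tau_fall \<epsilon> r c c' m n) ` Pow {1..N})"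
  unfolding tau_def phi_eq_max_rise_fall[OF assms] by (rule updisc_eq_Max_subset_value)

theorem theorem3:
  fixes N :: nat and \<delta> \<epsilon> :: real and r c c' :: "nat \<Rightarrow> real" and l m n :: int
  assumes "N \<ge> 1" and "\<delta> > 0" and "\<epsilon> > 0"
  shows "tau N \<delta> \<epsilon> r c c' l (m - 1) n + tau N \<delta> \<epsilon> r c c' (l + 1) m n =
         max (tau N \<delta> \<epsilon> r c c' l m n + tau N \<delta> \<epsilon> r c c' (l + 1) (m - 1) n)
             (tau N \<delta> \<epsilon> r c c' l (m - 1) (n + 1) + tau N \<delta> \<epsilon> r c c' (l + 1) m (n - 1) - \<delta> - \<epsilon>)"
proof -
  let ?a = "\<lambda>i. \<bar>r i\<bar>" and ?f = "tau_rise \<delta> r c c' l n" and ?g = "tau_fall \<epsilon> r c c' m n"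
  interpret toda_pair_values "{1..N}" ?a ?f ?g \<delta> \<epsilon>
    using assms by unfold_locales auto
  have "tau_rise \<delta> r c c' (l + 1) n = (\<lambda>i. ?f i + max 0 (?a i - \<delta>))"
    "tau_rise \<delta> r c c' l (n + 1) = (\<lambda>i. ?f i + ?a i)"
    "tau_rise \<delta> r c c' (l + 1) (n - 1) = (\<lambda>i. ?f i + max 0 (?a i - \<delta>) - ?a i)"
    "tau_fall \<epsilon> r c c' (m - 1) n = (\<lambda>i. ?g i + max 0 (?a i - \<epsilon>))"
    "tau_fall \<epsilon> r c c' (m - 1) (n + 1) = (\<lambda>i. ?g i + max 0 (?a i - \<epsilon>) - ?a i)"
    "tau_fall \<epsilon> r c c' m (n - 1) = (\<lambda>i. ?g i + ?a i)"
    by (auto simp: tau_rise_def tau_fall_def algebra_simps)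
  then show ?thesis
    unfolding tau_eq_Max_subset_value[OF \<open>\<delta> > 0\<close> \<open>\<epsilon> > 0\<close>] by (simp only: Max_subset_value_toda)
qed

end
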